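(* In the complex single-interference setting of the context, assume additionally $\tau\in(0,\pi/2)$, $c_1\neq0$, and $\delta_1:=\sigma_n^2\tan\tau-|c_1|\cos\tau\cos(\phi_c+\phi_z)\neq0$. Then $\mathrm{MSE}_{\rm RZF}=\mathrm{MSE}_{\rm MMSE\text{-}DR}$ if and only if $\cos(\phi_c+\phi_z)=-1$.
   Context: Complex single-interference model: $y(k)=s_0(k)h_0+s_1(k)h_1+n(k)\in\mathbb{C}^N$ ($N\ge2$), with $\|h_0\|=\|h_1\|=1$, $h_0^{\sf H}h_1=\sin\tau\,e^{i\phi_z}$, $\tau\in[0,\pi/2)$, $\phi_z\in[0,2\pi)$; zero-mean jointly weakly stationary complex signals $s_0,s_1$ with $\sigma_j^2:=E|s_j(k)|^2>0$, $c_1:=E[s_0^*(k)s_1(k)]=|c_1|e^{i\phi_c}$, $\phi_c\in[0,2\pi)$; noise $n(k)\sim\mathcal{CN}(0,\sigma_n^2I)$, $\sigma_n^2>0$, uncorrelated with the signals. $R:=E[y(k)y(k)^{\sf H}]$. The MSE of $w$ is $J_{\rm MSE}(w):=E|w^{\sf H}y(k)-s_0(k)|^2$. RZF beamformer $w_{\rm RZF}(\lambda):=R_\lambda^{-1}h_0/(h_0^{\sf H}R_\lambda^{-1}h_0)$ with $R_\lambda:=R+\lambda h_1h_1^{\sf H}$, $\lambda\ge0$, and $\mathrm{MSE}_{\rm RZF}:=\inf_{\lambda\ge0}J_{\rm MSE}(w_{\rm RZF}(\lambda))$. MMSE-DR beamformer $w_{\rm MMSE\text{-}DR}:=\widetilde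 R^{-1}h_0/(h_0^{\sf H}\widetilde R^{-1}h_0)$ with $\widetilde R:=\sigma_n^2I+\sigma_1^2h_1h_1^{\sf H}$, and $\mathrm{MSE}_{\rm MMSE\text{-}DR}:=J_{\rm MSE}(w_{\rm MMSE\text{-}DR})$. *)

theory Defs
  imports "HOL-Analysis.Analysis"
begin

definition hip :: "complex^'n \<Rightarrow> complex^'n \<Rightarrow> complex" where
  "hip u v = (\<Sum>i\<in>UNIV. cnj (u$i) * v$i)"

definition outer :: "complex^'n \<Rightarrow> complex^'n \<Rightarrow> complex^'n^'n" where
  "outer u v = (\<chi> i j. u$i * cnj (v$j))"

text \<open>Covariance R = E[y y^H] of y = s0 h0 + s1 h1 + n, written through the second-order
  moments sig0 = E|s0|^2, sig1 = E|s1|^2, c1 = E[s0^* s1], noise covariance sn * I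
  (note E[s0 s1^*] = cnj c1).\<close>
definition Rcov :: "real \<Rightarrow> real \<Rightarrow> complex \<Rightarrow> real \<Rightarrow> complex^'n \<Rightarrow> complex^'n \<Rightarrow> complex^'n^'n" where
  "Rcov sig0 sig1 c1 sn h0 h1 =
     (\<chi> i j. complex_of_real sn * (if i = j then 1 else 0)
            + complex_of_real sig0 * outer h0 h0 $ i $ j
            + cnj c1 * outer h0 h1 $ i $ j
            + c1 * outer h1 h0 $ i $ j
            + complex_of_real sig1 * outer h1 h1 $ i $ j)"

text \<open>J_MSE(w) = E|w^H y - s0|^2 = w^H R w - w^H p - p^H w + sig0, with
  p = E[y s0^*] = sig0 h0 + c1 h1.\<close>
definition Jmse :: "real \<Rightarrow> real \<Rightarrow> complex \<Rightarrow> real \<Rightarrow> complex^'n \<Rightarrow> complex^'n \<Rightarrow> complex^'n \<Rightarrow> real" where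
  "Jmse sig0 sig1 c1 sn h0 h1 w =
     (let p = complex_of_real sig0 *s h0 + c1 *s h1 in
      Re (hip w (Rcov sig0 sig1 c1 sn h0 h1 *v w) - hip w p - hip p w + complex_of_real sig0))"

definition bf :: "complex^'n^'n \<Rightarrow> complex^'n \<Rightarrow> complex^'n" where
  "bf A h0 = (1 / hip h0 (matrix_inv A *v h0)) *s (matrix_inv A *v h0)"

definition wRZF :: "real \<Rightarrow> real \<Rightarrow> complex \<Rightarrow> real \<Rightarrow> complex^'n \<Rightarrow> complex^'n \<Rightarrow> real \<Rightarrow> complex^'n" where
  "wRZF sig0 sig1 c1 sn h0 h1 lam =
     bf (Rcov sig0 sig1 c1 sn h0 h1 + (\<chi> i j. complex_of_real lam * outer h1 h1 $ i $ j)) h0"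

definition MSE_RZF :: "real \<Rightarrow> real \<Rightarrow> complex \<Rightarrow> real \<Rightarrow> complex^'n \<Rightarrow> complex^'n \<Rightarrow> real" where
  "MSE_RZF sig0 sig1 c1 sn h0 h1 =
     (INF lam\<in>{0::real..}. Jmse sig0 sig1 c1 sn h0 h1 (wRZF sig0 sig1 c1 sn h0 h1 lam))"

definition wMMSEDR :: "real \<Rightarrow> real \<Rightarrow> complex^'n \<Rightarrow> complex^'n \<Rightarrow> complex^'n" where
  "wMMSEDR sig1 sn h0 h1 =
     bf (\<chi> i j. complex_of_real sn * (if i = j then 1 else 0)
              + complex_of_real sig1 * outer h1 h1 $ i $ j) h0"

definition MSE_MMSEDR :: "real \<Rightarrow> real \<Rightarrow> complex \<Rightarrow> real \<Rightarrow> complex^'n \<Rightarrow> complex^'n \<Rightarrow> real" where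
  "MSE_MMSEDR sig0 sig1 c1 sn h0 h1 = Jmse sig0 sig1 c1 sn h0 h1 (wMMSEDR sig1 sn h0 h1)"

end

theory Submission
  imports Defs
begin

(* If A = sn I + M with M a positive semidefinite combination of h0 h0^H, h0 h1^H, h1 h0^H and
   h1 h1^H, the beamformer w = A^-1 h0 / (h0^H A^-1 h0) is distortionless (h0^H w = 1) and lies in
   span {h0, h1}. For such w the norm, and hence the MSE sn |w|^2 + sig1 |h1^H w|^2, depends only
   on the leakage B = h1^H w; as a function of B the MSE is a strictly convex quadratic whose
   minimiser B* is exactly the leakage of the MMSE-DR beamformer. The RZF leakages satisfy
   B(lam) - B* = - C (lam sn r + (sn + sig1 C) c1) / ((sn + sig1 C) (sn + (sig1 + lam) C)),
   with r = cnj (h0^H h1) and C = cos^2 tau. The conic combination lam sn r + (sn + sig1 C) c1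
   vanishes for some lam >= 0 iff c1 is a negative multiple of r, i.e. iff cos (phi_c + phi_z) = -1;
   otherwise the cone spanned by r and c1 is pointed, which keeps B(lam) uniformly away from B*,
   so the infimum over lam exceeds the MMSE-DR value. *)

lemma hip_add_right: "hip u (v + w) = hip u v + hip u w"
  by (simp add: hip_def distrib_left sum.distrib)

lemma hip_add_left: "hip (u + v) w = hip u w + hip v w"
  by (simp add: hip_def distrib_right sum.distrib)

lemma hip_scale_right: "hip u (k *s v) = k * hip u v"
  by (simp add: hip_def sum_distrib_left mult.left_commute)

lemma hip_scale_left: "hip (k *s u) v = cnj k * hip u v"
  by (simp add: hip_def sum_distrib_left mult.assoc)

lemma hip_commute: "hip u v = cnj (hip v u)"
  by (simp add: hip_def mult.commute)

lemma hip_self: "hip u u = complex_of_real ((norm u)\<^sup>2)"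
proof -
  have "hip u u = (\<Sum>i\<in>UNIV. complex_of_real ((cmod (u$i))\<^sup>2))"
    unfolding hip_def
    by (rule sum.cong) (auto simp: complex_norm_square mult.commute simp del: of_real_power)
  also have "\<dots> = complex_of_real (\<Sum>i\<in>UNIV. (cmod (u$i))\<^sup>2)"
    by simp
  also have "(\<Sum>i\<in>UNIV. (cmod (u$i))\<^sup>2) = (norm u)\<^sup>2"
    unfolding norm_vec_def L2_set_def by (simp add: sum_nonneg)
  finally show ?thesis .
qed

lemma cmod_add_power2: "(cmod (z + w))\<^sup>2 = (cmod z)\<^sup>2 + (cmod w)\<^sup>2 + 2 * Re (z * cnj w)"
  unfolding cmod_power2 by (simp add: power2_eq_square algebra_simps)

lemma Rcov_mult_vector:
  "Rcov a b c sn h0 h1 *v x = complex_of_real sn *s x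
     + (complex_of_real a * hip h0 x + cnj c * hip h1 x) *s h0
     + (c * hip h0 x + complex_of_real b * hip h1 x) *s h1"
proof -
  have delta: "(\<Sum>j\<in>UNIV. k * (x $ j * (if i = j then 1 else 0))) = k * x $ i" for k i
    by (simp add: if_distrib cong: if_cong)
  show ?thesis
    unfolding Rcov_def matrix_vector_mult_def hip_def outer_def
    by (simp add: vec_eq_iff algebra_simps sum.distrib sum_distrib_left delta)
qed

lemma two_mult_le_of_square_le:
  fixes a b k p q :: real
  assumes "a \<ge> 0" "b \<ge> 0" "k\<^sup>2 \<le> a * b"
  shows "2 * k * p * q \<le> a * p\<^sup>2 + b * q\<^sup>2"
proof (cases "a = 0")
  case True
  then show ?thesis using assms by simp
next
  case False
  have "a * (a * p\<^sup>2 + b * q\<^sup>2 - 2 * k * p * q) = (a * p - k * q)\<^sup>2 + (a * b - k\<^sup>2) * q\<^sup>2"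
    by (simp add: algebra_simps power2_eq_square)
  also have "\<dots> \<ge> 0" using assms by simp
  finally show ?thesis using assms False by (simp add: zero_le_mult_iff)
qed

lemma Re_hip_Rcov_ge:
  assumes "a \<ge> 0" "b \<ge> 0" "(cmod c)\<^sup>2 \<le> a * b"
  shows "sn * (norm x)\<^sup>2 \<le> Re (hip x (Rcov a b c sn h0 h1 *v x))"
proof -
  define P Q where "P = hip h0 x" and "Q = hip h1 x"
  have "hip x (Rcov a b c sn h0 h1 *v x) = complex_of_real sn * hip x x
     + (complex_of_real a * P + cnj c * Q) * cnj P + (c * P + complex_of_real b * Q) * cnj Q"
    unfolding Rcov_mult_vector P_def Q_def
    by (simp add: hip_add_right hip_scale_right hip_commute[of x h0] hip_commute[of x h1] algebra_simps)
  also have "\<dots> = complex_of_real (sn * (norm x)\<^sup>2 + a * (cmod P)\<^sup>2 + b * (cmod Q)\<^sup>2)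
      + (c * P * cnj Q + cnj (c * P * cnj Q))"
    by (simp add: hip_self complex_norm_square algebra_simps del: of_real_power)
  finally have quad: "Re (hip x (Rcov a b c sn h0 h1 *v x))
      = sn * (norm x)\<^sup>2 + a * (cmod P)\<^sup>2 + b * (cmod Q)\<^sup>2 + 2 * Re (c * P * cnj Q)"
    by (simp add: algebra_simps)
  have "- (cmod c * cmod P * cmod Q) \<le> Re (c * P * cnj Q)"
    using abs_Re_le_cmod[of "c * P * cnj Q"] by (simp add: norm_mult)
  moreover have "2 * cmod c * cmod P * cmod Q \<le> a * (cmod P)\<^sup>2 + b * (cmod Q)\<^sup>2"
    using assms by (intro two_mult_le_of_square_le) auto
  ultimately show ?thesis unfolding quad by linarith
qed

lemma bf_distortionless:
  fixes A :: "complex^'n^'n"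
  assumes pos: "\<And>x. x \<noteq> 0 \<Longrightarrow> Re (hip x (A *v x)) > 0" and "h \<noteq> 0"
  shows "hip h (bf A h) = 1" and "\<exists>\<mu>. A *v bf A h = \<mu> *s h"
proof -
  have "\<forall>x. A *v x = 0 \<longrightarrow> x = 0"
    using pos by (fastforce simp: hip_def)
  then have "invertible A"
    using matrix_left_invertible_ker invertible_left_inverse by blast
  then have "A ** matrix_inv A = mat 1"
    unfolding matrix_inv_def invertible_def by (rule someI2_ex) simp
  define x where "x = matrix_inv A *v h"
  define P where "P = hip h x"
  have Ax: "A *v x = h"
    unfolding x_def using \<open>A ** matrix_inv A = mat 1\<close> by (simp add: matrix_vector_mul_assoc)
  then have "x \<noteq> 0"
    using \<open>h \<noteq> 0\<close> by auto
  then have "Re P > 0"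
    using pos[of x] Ax unfolding P_def by (subst hip_commute) simp
  then have "P \<noteq> 0" by auto
  have w: "bf A h = (1 / P) *s x"
    unfolding bf_def x_def P_def ..
  show "hip h (bf A h) = 1"
    using \<open>P \<noteq> 0\<close> unfolding w hip_scale_right P_def[symmetric] by simp
  show "\<exists>\<mu>. A *v bf A h = \<mu> *s h"
    unfolding w vec.linear_scale[OF matrix_vector_mul_linear_gen] Ax by blast
qed

lemma distortionless_in_span:
  assumes "norm h0 = 1" "norm h1 = 1" "w = \<alpha> *s h0 + \<beta> *s h1" "hip h0 w = 1"
  defines "\<rho> \<equiv> hip h0 h1" and "C \<equiv> 1 - (cmod (hip h0 h1))\<^sup>2"
  shows "\<beta> * C = hip h1 w - cnj \<rho>"
    and "C * (norm w)\<^sup>2 = C + (cmod (hip h1 w - cnj \<rho>))\<^sup>2"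
proof -
  define B where "B = hip h1 w"
  have unit: "hip h0 h0 = 1" "hip h1 h1 = 1"
    using assms(1,2) by (simp_all add: hip_self)
  have rr: "\<rho> * cnj \<rho> = 1 - complex_of_real C"
    unfolding C_def \<rho>_def by (simp add: complex_norm_square del: of_real_power)
  have h0w: "\<alpha> + \<beta> * \<rho> = 1"
    using assms(4) unfolding assms(3) \<rho>_def by (simp add: hip_add_right hip_scale_right unit)
  have h1w: "B = \<alpha> * cnj \<rho> + \<beta>"
    unfolding B_def assms(3) \<rho>_def
    by (simp add: hip_add_right hip_scale_right unit hip_commute[of h1 h0])
  have \<beta>C: "\<beta> * C = B - cnj \<rho>"
  proof -
    have "B - cnj \<rho> = (\<alpha> * cnj \<rho> + \<beta>) - (\<alpha> + \<beta> * \<rho>) * cnj \<rho>"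
      using h1w h0w by simp
    also have "\<dots> = \<beta> * (1 - \<rho> * cnj \<rho>)"
      by (simp add: algebra_simps)
    finally show ?thesis unfolding rr by simp
  qed
  then show "\<beta> * C = hip h1 w - cnj \<rho>" unfolding B_def .
  have "hip w w = cnj \<alpha> + cnj \<beta> * B"
    using assms(4) unfolding B_def
    by (subst (1) assms(3)) (simp add: hip_add_left hip_scale_left)
  also have "cnj \<alpha> = 1 - cnj \<beta> * cnj \<rho>"
    using arg_cong[OF h0w, of cnj] by (simp add: algebra_simps)
  finally have ww: "hip w w = 1 + cnj \<beta> * (B - cnj \<rho>)"
    by (simp add: algebra_simps)
  have "complex_of_real C * hip w w = C + cnj (\<beta> * C) * (B - cnj \<rho>)"
    unfolding ww by (simp add: algebra_simps)
  also have "\<dots> = complex_of_real (C + (cmod (B - cnj \<rho>))\<^sup>2)"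
    unfolding \<beta>C by (simp add: complex_norm_square mult.commute del: of_real_power)
  finally show "C * (norm w)\<^sup>2 = C + (cmod (hip h1 w - cnj \<rho>))\<^sup>2"
    unfolding hip_self B_def by (metis of_real_eq_iff of_real_mult)
qed

definition Rcov_leakage :: "real \<Rightarrow> real \<Rightarrow> real \<Rightarrow> complex \<Rightarrow> complex \<Rightarrow> complex" where
  "Rcov_leakage sn b C r c = (sn * r - c * C) / complex_of_real (sn + b * C)"

lemma leakage_bf_Rcov:
  fixes h0 h1 :: "complex^'n"
  assumes sn: "sn > 0" and ab: "a \<ge> 0" "b \<ge> 0" "(cmod c)\<^sup>2 \<le> a * b"
    and unit: "norm h0 = 1" "norm h1 = 1" and corr: "cmod (hip h0 h1) < 1"
  defines "w \<equiv> bf (Rcov a b c sn h0 h1) h0" and "C \<equiv> 1 - (cmod (hip h0 h1))\<^sup>2"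
  shows "hip h0 w = 1"
    and "hip h1 w = Rcov_leakage sn b C (cnj (hip h0 h1)) c"
    and "C * (norm w)\<^sup>2 = C + (cmod (hip h1 w - cnj (hip h0 h1)))\<^sup>2"
proof -
  have pos: "Re (hip x (Rcov a b c sn h0 h1 *v x)) > 0" if "x \<noteq> 0" for x
  proof -
    have "sn * (norm x)\<^sup>2 > 0" using sn that by simp
    then show ?thesis using Re_hip_Rcov_ge[OF ab, of sn x h0 h1] by linarith
  qed
  have "h0 \<noteq> 0" using unit by auto
  have "hip h0 w = 1" "\<exists>\<mu>. Rcov a b c sn h0 h1 *v w = \<mu> *s h0"
    unfolding w_def by (rule bf_distortionless; use pos \<open>h0 \<noteq> 0\<close> in blast)+
  then obtain \<mu> where R: "Rcov a b c sn h0 h1 *v w = \<mu> *s h0"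
    and h0w: "hip h0 w = 1" by blast
  show "hip h0 w = 1" by (fact h0w)
  define B where "B = hip h1 w"
  from R have E: "complex_of_real sn *s w + (a + cnj c * B) *s h0 + (c + b * B) *s h1 = \<mu> *s h0"
    unfolding Rcov_mult_vector h0w B_def by simp
  have "w = (1 / sn) *s (complex_of_real sn *s w)"
    using sn by simp
  also have "complex_of_real sn *s w = \<mu> *s h0 - (a + cnj c * B) *s h0 - (c + b * B) *s h1"
    unfolding E[symmetric] by simp
  also have "(1 / sn) *s \<dots> = ((\<mu> - a - cnj c * B) / sn) *s h0 + (- (c + b * B) / sn) *s h1"
    using sn by (simp add: vec_eq_iff field_simps)
  finally have span: "w = ((\<mu> - a - cnj c * B) / sn) *s h0 + (- (c + b * B) / sn) *s h1" .
  note leak = distortionless_in_span[OF unit span h0w, folded C_def B_def]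
  show "C * (norm w)\<^sup>2 = C + (cmod (hip h1 w - cnj (hip h0 h1)))\<^sup>2"
    using leak(2) unfolding B_def .
  have "C > 0"
    unfolding C_def using corr by (simp add: abs_square_less_1)
  then have "sn + b * C > 0"
    using sn ab by (simp add: add_pos_nonneg)
  moreover have "hip h1 w * (sn + b * C) = sn * cnj (hip h0 h1) - c * C"
    using leak(1) sn unfolding B_def by (simp add: field_simps)
  ultimately show "hip h1 w = Rcov_leakage sn b C (cnj (hip h0 h1)) c"
    unfolding Rcov_leakage_def by (simp add: eq_divide_eq del: of_real_add)
qed

lemma Jmse_distortionless:
  assumes "hip h0 w = 1"
  shows "Jmse sig0 s c1 sn h0 h1 w = sn * (norm w)\<^sup>2 + s * (cmod (hip h1 w))\<^sup>2"
proof -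
  have "hip w h0 = 1" "hip w h1 = cnj (hip h1 w)"
    using assms hip_commute[of w h0] hip_commute[of w h1] by simp_all
  then have "hip w (Rcov sig0 s c1 sn h0 h1 *v w) - hip w (complex_of_real sig0 *s h0 + c1 *s h1)
        - hip (complex_of_real sig0 *s h0 + c1 *s h1) w + complex_of_real sig0
        = complex_of_real (sn * (norm w)\<^sup>2 + s * (cmod (hip h1 w))\<^sup>2)"
    unfolding Rcov_mult_vector using assms
    by (simp add: hip_add_right hip_add_left hip_scale_right hip_scale_left hip_self
        complex_norm_square algebra_simps del: of_real_power)
  then show ?thesis
    unfolding Jmse_def Let_def by simp
qed

(* The MSE sn |w|^2 + s |B|^2 of a distortionless w in span {h0, h1} with leakage B = h1^H w,
   where r = cnj (h0^H h1) and C = 1 - |h0^H h1|^2. *)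
definition mse_of_leakage :: "real \<Rightarrow> real \<Rightarrow> real \<Rightarrow> complex \<Rightarrow> complex \<Rightarrow> real" where
  "mse_of_leakage sn s C r B = sn + sn * (cmod (B - r))\<^sup>2 / C + s * (cmod B)\<^sup>2"

lemma Jmse_bf_Rcov:
  fixes h0 h1 :: "complex^'n"
  assumes "sn > 0" "a \<ge> 0" "b \<ge> 0" "(cmod c)\<^sup>2 \<le> a * b"
    and "norm h0 = 1" "norm h1 = 1" "cmod (hip h0 h1) < 1"
  defines "C \<equiv> 1 - (cmod (hip h0 h1))\<^sup>2"
  shows "Jmse sig0 s c1 sn h0 h1 (bf (Rcov a b c sn h0 h1) h0)
    = mse_of_leakage sn s C (cnj (hip h0 h1)) (Rcov_leakage sn b C (cnj (hip h0 h1)) c)"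
proof -
  note leak = leakage_bf_Rcov[OF assms(1-7), folded C_def]
  have "C > 0"
    unfolding C_def using assms(7) by (simp add: abs_square_less_1)
  define w where "w = bf (Rcov a b c sn h0 h1) h0"
  have "sn * (norm w)\<^sup>2 = sn * (C * (norm w)\<^sup>2) / C"
    using \<open>C > 0\<close> by simp
  also have "\<dots> = sn + sn * (cmod (hip h1 w - cnj (hip h0 h1)))\<^sup>2 / C"
    unfolding w_def leak(3) using \<open>C > 0\<close> by (simp add: field_simps)
  finally show ?thesis
    unfolding Jmse_distortionless[OF leak(1)] mse_of_leakage_def leak(2)[symmetric] w_def
    by simp
qed

lemma mse_of_leakage_eq_min_plus:
  fixes sn s C :: real and r B :: complex
  assumes "C > 0" "sn + s * C \<noteq> 0"
  shows "mse_of_leakage sn s C r B = mse_of_leakage sn s C r (Rcov_leakage sn s C r 0)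
           + (sn / C + s) * (cmod (B - Rcov_leakage sn s C r 0))\<^sup>2"
proof -
  define Bs where "Bs = Rcov_leakage sn s C r 0"
  have "(sn + s * C) * Bs = sn * r"
    unfolding Bs_def Rcov_leakage_def using assms(2) by (simp del: of_real_add)
  then have stationary: "sn / C * (Bs - r) + s * Bs = 0"
    using assms(1) by (simp add: field_simps)
  define p q where "p = Re ((B - Bs) * cnj (Bs - r))" and "q = Re ((B - Bs) * cnj Bs)"
  have "sn / C * p + s * q = Re ((B - Bs) * cnj (sn / C * (Bs - r) + s * Bs))"
    unfolding p_def q_def using assms(1) by (simp add: field_simps)
  then have pq: "sn * p + s * C * q = 0"
    unfolding stationary using assms(1) by (simp add: field_simps)
  have "(cmod (B - r))\<^sup>2 = (cmod (B - Bs))\<^sup>2 + (cmod (Bs - r))\<^sup>2 + 2 * p"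
    using cmod_add_power2[of "B - Bs" "Bs - r"] unfolding p_def by simp
  moreover have "(cmod B)\<^sup>2 = (cmod (B - Bs))\<^sup>2 + (cmod Bs)\<^sup>2 + 2 * q"
    using cmod_add_power2[of "B - Bs" Bs] unfolding q_def by simp
  ultimately have "mse_of_leakage sn s C r B
      = mse_of_leakage sn s C r Bs + (sn / C + s) * (cmod (B - Bs))\<^sup>2 + 2 * (sn * p + s * C * q) / C"
    unfolding mse_of_leakage_def using assms(1) by (simp add: field_simps)
  then show ?thesis
    unfolding pq Bs_def by simp
qed

lemma cmod_conic_combination_lower_bound:
  fixes u v :: complex
  assumes "Re (u * cnj v) > - (cmod u * cmod v)"
  obtains \<delta> :: real where "\<delta> > 0"
    and "\<And>x y. x \<ge> 0 \<Longrightarrow> y \<ge> 0 \<Longrightarrow> \<delta> * (x * cmod u + y * cmod v)\<^sup>2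
           \<le> (cmod (complex_of_real x * u + complex_of_real y * v))\<^sup>2"
proof
  have "u \<noteq> 0" "v \<noteq> 0"
    using assms by auto
  then have uv: "cmod u * cmod v > 0" by simp
  define \<kappa> where "\<kappa> = Re (u * cnj v) / (cmod u * cmod v)"
  have "\<kappa> > -1"
    unfolding \<kappa>_def using assms uv by (simp add: field_simps)
  moreover have "\<kappa> \<le> 1"
    unfolding \<kappa>_def using uv abs_Re_le_cmod[of "u * cnj v"] by (simp add: norm_mult)
  ultimately show "(1 + \<kappa>) / 4 > 0" by simp
  fix x y :: real
  assume "x \<ge> 0" "y \<ge> 0"
  define X Y where "X = x * cmod u" and "Y = y * cmod v"
  have "X \<ge> 0" "Y \<ge> 0"
    unfolding X_def Y_def using \<open>x \<ge> 0\<close> \<open>y \<ge> 0\<close> by simp_all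
  have "Re (complex_of_real x * u * cnj (complex_of_real y * v)) = \<kappa> * X * Y"
    unfolding \<kappa>_def X_def Y_def using \<open>u \<noteq> 0\<close> \<open>v \<noteq> 0\<close> by (simp add: field_simps)
  then have expand:
      "(cmod (complex_of_real x * u + complex_of_real y * v))\<^sup>2 = X\<^sup>2 + Y\<^sup>2 + 2 * \<kappa> * X * Y"
    unfolding cmod_add_power2 X_def Y_def using \<open>x \<ge> 0\<close> \<open>y \<ge> 0\<close>
    by (simp add: norm_mult power_mult_distrib)
  have "X\<^sup>2 + Y\<^sup>2 + 2 * \<kappa> * X * Y - (1 + \<kappa>) / 4 * (X + Y)\<^sup>2
      = (3 - \<kappa>) / 4 * (X - Y)\<^sup>2 + (1 + \<kappa>) * X * Y"
    by (simp add: field_simps power2_eq_square)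
  also have "\<dots> \<ge> 0"
    using \<open>\<kappa> > -1\<close> \<open>\<kappa> \<le> 1\<close> \<open>X \<ge> 0\<close> \<open>Y \<ge> 0\<close> by simp
  finally show "(1 + \<kappa>) / 4 * (x * cmod u + y * cmod v)\<^sup>2
      \<le> (cmod (complex_of_real x * u + complex_of_real y * v))\<^sup>2"
    unfolding expand X_def[symmetric] Y_def[symmetric] by simp
qed

lemma Rcov_leakage_regularized_eq_uncorrelated:
  fixes sn s C :: real and r c :: complex
  assumes "sn > 0" "s \<ge> 0" "C > 0" "r \<noteq> 0" "Re (c * cnj r) = - (cmod c * cmod r)"
  obtains lam where "lam \<ge> 0" "Rcov_leakage sn (s + lam) C r c = Rcov_leakage sn s C r 0"
proof
  define t where "t = cmod c / cmod r"
  have "t \<ge> 0" and tr: "t * cmod r = cmod c"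
    unfolding t_def using assms(4) by simp_all
  have "Re (c * cnj (t * r)) = t * Re (c * cnj r)"
    by (simp add: algebra_simps)
  also have "\<dots> = - (cmod c)\<^sup>2"
    by (simp only: assms(5)) (simp add: tr[symmetric] power2_eq_square)
  finally have "(cmod (c + t * r))\<^sup>2 = 0"
    unfolding cmod_add_power2 using \<open>t \<ge> 0\<close> tr by (simp add: norm_mult)
  then have c: "c = - (t * r)"
    by (simp add: add_eq_0_iff)
  define lam where "lam = t * (sn + s * C) / sn"
  show "lam \<ge> 0"
    unfolding lam_def using assms(1-3) \<open>t \<ge> 0\<close> by simp
  have "sn + s * C > 0" "sn + t * C > 0"
    using assms(1-3) \<open>t \<ge> 0\<close> by (simp_all add: add_pos_nonneg)
  have den: "sn + (s + lam) * C = (sn + s * C) * (sn + t * C) / sn"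
    unfolding lam_def using assms(1) by (simp add: field_simps)
  have num: "sn * r - c * C = complex_of_real (sn + t * C) * r"
    unfolding c by (simp add: algebra_simps)
  show "Rcov_leakage sn (s + lam) C r c = Rcov_leakage sn s C r 0"
    unfolding Rcov_leakage_def num den of_real_divide of_real_mult
    using assms(1) \<open>sn + s * C > 0\<close> \<open>sn + t * C > 0\<close>
    by (simp add: field_simps del: of_real_add)
qed

lemma Rcov_leakage_regularized_diff:
  fixes sn s C lam :: real and r c :: complex
  assumes "sn + s * C > 0" "sn + (s + lam) * C > 0"
  shows "Rcov_leakage sn (s + lam) C r c - Rcov_leakage sn s C r 0
    = - complex_of_real (C / ((sn + s * C) * (sn + (s + lam) * C)))
        * (complex_of_real (lam * sn) * r + complex_of_real (sn + s * C) * c)"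
proof -
  define D Dl where "D = sn + s * C" and "Dl = sn + (s + lam) * C"
  have "D > 0" "Dl > 0"
    using assms unfolding D_def Dl_def by simp_all
  then have nz: "complex_of_real D \<noteq> 0" "complex_of_real Dl \<noteq> 0"
    by simp_all
  have "Rcov_leakage sn (s + lam) C r c - Rcov_leakage sn s C r 0
      = ((sn * r - c * C) * D - sn * r * Dl) / (D * Dl)"
    unfolding Rcov_leakage_def Dl_def[symmetric] D_def[symmetric] using nz by (simp add: field_simps)
  also have "(sn * r - c * C) * D - sn * r * Dl = - C * (lam * sn * r + D * c)"
    unfolding D_def Dl_def by (simp add: algebra_simps)
  finally show ?thesis
    unfolding D_def[symmetric] Dl_def[symmetric] using nz by (simp add: field_simps)
qed

lemma Rcov_leakage_regularized_bounded_away: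
  fixes sn s C :: real and r c :: complex
  assumes "sn > 0" "s \<ge> 0" "C > 0" "Re (c * cnj r) > - (cmod c * cmod r)"
  obtains \<epsilon> where "\<epsilon> > 0"
    and "\<And>lam. lam \<ge> 0 \<Longrightarrow>
      \<epsilon> \<le> (cmod (Rcov_leakage sn (s + lam) C r c - Rcov_leakage sn s C r 0))\<^sup>2"
proof -
  have "r \<noteq> 0" "c \<noteq> 0"
    using assms(4) by auto
  have "Re (r * cnj c) > - (cmod r * cmod c)"
    using assms(4) by (simp add: mult.commute)
  then obtain \<delta> where "\<delta> > 0"
    and cone: "\<And>x y. x \<ge> 0 \<Longrightarrow> y \<ge> 0 \<Longrightarrow> \<delta> * (x * cmod r + y * cmod c)\<^sup>2
      \<le> (cmod (complex_of_real x * r + complex_of_real y * c))\<^sup>2"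
    using cmod_conic_combination_lower_bound by blast
  define D where "D = sn + s * C"
  have "D > 0"
    unfolding D_def using assms(1-3) by (simp add: add_pos_nonneg)
  define m where "m = min (sn * cmod r / C) (cmod c)"
  have "m > 0"
    unfolding m_def using assms(1,3) \<open>r \<noteq> 0\<close> \<open>c \<noteq> 0\<close> by simp
  show ?thesis
  proof
    show "C\<^sup>2 * \<delta> * m\<^sup>2 / D\<^sup>2 > 0"
      using assms(3) \<open>\<delta> > 0\<close> \<open>m > 0\<close> \<open>D > 0\<close> by simp
    fix lam :: real
    assume "lam \<ge> 0"
    define Dl where "Dl = sn + (s + lam) * C"
    have "Dl = D + lam * C" "Dl > 0"
      unfolding Dl_def D_def using assms(1-3) \<open>lam \<ge> 0\<close>
      by (simp_all add: algebra_simps add_pos_nonneg)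
    note diff = Rcov_leakage_regularized_diff
        [OF \<open>D > 0\<close>[unfolded D_def] \<open>Dl > 0\<close>[unfolded Dl_def], folded D_def Dl_def]
    have "m * Dl \<le> lam * sn * cmod r + D * cmod c"
    proof -
      have "lam * C * m \<le> lam * sn * cmod r"
        using mult_left_mono[of m "sn * cmod r / C" "lam * C"] assms(3) \<open>lam \<ge> 0\<close>
        unfolding m_def by simp
      moreover have "D * m \<le> D * cmod c"
        unfolding m_def using \<open>D > 0\<close> by simp
      ultimately show ?thesis
        unfolding \<open>Dl = D + lam * C\<close> by (simp add: algebra_simps)
    qed
    then have "\<delta> * (m * Dl)\<^sup>2 \<le> \<delta> * (lam * sn * cmod r + D * cmod c)\<^sup>2"
      using \<open>\<delta> > 0\<close> \<open>m > 0\<close> \<open>Dl > 0\<close> by (simp add: power_mono)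
    also have "\<dots> \<le> (cmod (complex_of_real (lam * sn) * r + complex_of_real D * c))\<^sup>2"
      using cone[of "lam * sn" D] assms(1) \<open>lam \<ge> 0\<close> \<open>D > 0\<close> by simp
    finally have "C\<^sup>2 * \<delta> * m\<^sup>2 / D\<^sup>2
        \<le> (C / (D * Dl))\<^sup>2 * (cmod (complex_of_real (lam * sn) * r + complex_of_real D * c))\<^sup>2"
      using \<open>D > 0\<close> \<open>Dl > 0\<close> assms(3)
      by (simp add: field_simps power_mult_distrib)
    also have "\<dots> = (cmod (Rcov_leakage sn (s + lam) C r c - Rcov_leakage sn s C r 0))\<^sup>2"
      unfolding diff using \<open>D > 0\<close> \<open>Dl > 0\<close> assms(3)
      by (simp add: norm_mult norm_divide power_mult_distrib power_divide)
    finally show "C\<^sup>2 * \<delta> * m\<^sup>2 / D\<^sup>2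
        \<le> (cmod (Rcov_leakage sn (s + lam) C r c - Rcov_leakage sn s C r 0))\<^sup>2" .
  qed
qed

lemma INF_mse_of_leakage_regularized_eq_iff:
  fixes sn s C :: real and r c :: complex
  assumes "sn > 0" "s \<ge> 0" "C > 0" "r \<noteq> 0"
  shows "(INF lam\<in>{0..}. mse_of_leakage sn s C r (Rcov_leakage sn (s + lam) C r c))
           = mse_of_leakage sn s C r (Rcov_leakage sn s C r 0)
         \<longleftrightarrow> Re (c * cnj r) = - (cmod c * cmod r)"
proof -
  define f where "f lam = mse_of_leakage sn s C r (Rcov_leakage sn (s + lam) C r c)" for lam
  define Bs where "Bs = Rcov_leakage sn s C r 0"
  have "sn + s * C > 0"
    using assms(1-3) by (simp add: add_pos_nonneg)
  then have "sn + s * C \<noteq> 0" by simp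
  then have shift: "f lam = mse_of_leakage sn s C r Bs
      + (sn / C + s) * (cmod (Rcov_leakage sn (s + lam) C r c - Bs))\<^sup>2" for lam
    unfolding f_def Bs_def by (rule mse_of_leakage_eq_min_plus[OF assms(3)])
  have "sn / C + s > 0"
    using assms(1-3) by (simp add: add_pos_nonneg)
  have "- (cmod c * cmod r) \<le> Re (c * cnj r)"
    using abs_Re_le_cmod[of "c * cnj r"] by (simp add: norm_mult)
  then consider (aligned) "Re (c * cnj r) = - (cmod c * cmod r)"
    | (not_aligned) "Re (c * cnj r) > - (cmod c * cmod r)"
    by linarith
  then show ?thesis
  proof cases
    case aligned
    then obtain lam0 where "lam0 \<ge> 0" "Rcov_leakage sn (s + lam0) C r c = Bs"
      unfolding Bs_def using Rcov_leakage_regularized_eq_uncorrelated[OF assms aligned] by blast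
    then have min: "f lam0 = mse_of_leakage sn s C r Bs"
      by (simp add: shift)
    have "(INF lam\<in>{0..}. f lam) = f lam0"
    proof (rule cInf_eq_minimum)
      show "f lam0 \<in> f ` {0..}"
        using \<open>lam0 \<ge> 0\<close> by simp
    next
      fix y
      assume "y \<in> f ` {0..}"
      then show "f lam0 \<le> y"
        unfolding min using \<open>sn / C + s > 0\<close> by (auto simp: shift)
    qed
    with aligned min show ?thesis
      unfolding f_def Bs_def by simp
  next
    case not_aligned
    then obtain \<epsilon> where "\<epsilon> > 0"
      and gap: "\<And>lam. lam \<ge> 0 \<Longrightarrow> \<epsilon> \<le> (cmod (Rcov_leakage sn (s + lam) C r c - Bs))\<^sup>2"
      unfolding Bs_def using Rcov_leakage_regularized_bounded_away[OF assms(1-3)] by blast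
    have "mse_of_leakage sn s C r Bs + (sn / C + s) * \<epsilon> \<le> (INF lam\<in>{0..}. f lam)"
    proof (rule cINF_greatest)
      fix lam :: real
      assume "lam \<in> {0..}"
      then show "mse_of_leakage sn s C r Bs + (sn / C + s) * \<epsilon> \<le> f lam"
        unfolding shift using gap[of lam] \<open>sn / C + s > 0\<close> by simp
    qed simp
    moreover have "(sn / C + s) * \<epsilon> > 0"
      using \<open>sn / C + s > 0\<close> \<open>\<epsilon> > 0\<close> by simp
    ultimately show ?thesis
      using not_aligned unfolding f_def Bs_def by auto
  qed
qed

lemma wRZF_eq_bf_Rcov:
  "wRZF sig0 sig1 c1 sn h0 h1 lam = bf (Rcov sig0 (sig1 + lam) c1 sn h0 h1) h0"
proof -
  have "Rcov sig0 sig1 c1 sn h0 h1 + (\<chi> i j. complex_of_real lam * outer h1 h1 $ i $ j)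
      = Rcov sig0 (sig1 + lam) c1 sn h0 h1"
    unfolding Rcov_def by (simp add: vec_eq_iff algebra_simps)
  then show ?thesis
    unfolding wRZF_def by simp
qed

lemma wMMSEDR_eq_bf_Rcov: "wMMSEDR sig1 sn h0 h1 = bf (Rcov 0 sig1 0 sn h0 h1) h0"
  unfolding wMMSEDR_def Rcov_def by simp

lemma MSE_MMSEDR_eq_mse_of_leakage:
  fixes h0 h1 :: "complex^'n"
  assumes "sn > 0" "sig1 \<ge> 0" "norm h0 = 1" "norm h1 = 1" "cmod (hip h0 h1) < 1"
  defines "C \<equiv> 1 - (cmod (hip h0 h1))\<^sup>2"
  shows "MSE_MMSEDR sig0 sig1 c1 sn h0 h1
    = mse_of_leakage sn sig1 C (cnj (hip h0 h1)) (Rcov_leakage sn sig1 C (cnj (hip h0 h1)) 0)"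
  unfolding MSE_MMSEDR_def wMMSEDR_eq_bf_Rcov C_def using assms(1-5) by (intro Jmse_bf_Rcov) auto

lemma MSE_RZF_eq_INF_mse_of_leakage:
  fixes h0 h1 :: "complex^'n"
  assumes "sn > 0" "sig0 \<ge> 0" "sig1 \<ge> 0" "(cmod c1)\<^sup>2 \<le> sig0 * sig1"
    and "norm h0 = 1" "norm h1 = 1" "cmod (hip h0 h1) < 1"
  defines "C \<equiv> 1 - (cmod (hip h0 h1))\<^sup>2"
  shows "MSE_RZF sig0 sig1 c1 sn h0 h1 = (INF lam\<in>{0..}. mse_of_leakage sn sig1 C (cnj (hip h0 h1))
           (Rcov_leakage sn (sig1 + lam) C (cnj (hip h0 h1)) c1))"
proof -
  have "(cmod c1)\<^sup>2 \<le> sig0 * (sig1 + lam)" if "lam \<ge> 0" for lam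
    using assms(2,4) that by (simp add: distrib_left add_increasing2)
  then show ?thesis
    unfolding MSE_RZF_def wRZF_eq_bf_Rcov C_def using assms(1-3,5-7)
    by (intro INF_cong Jmse_bf_Rcov) auto
qed

theorem mainTheorem12:
  fixes h0 h1 :: "complex^'n"
    and sig0 sig1 sn \<tau> \<phi>z \<phi>c :: real
    and c1 :: complex
  assumes N2: "CARD('n) \<ge> 2"
    and h0: "norm h0 = 1" and h1: "norm h1 = 1"
    and tau: "0 < \<tau>" "\<tau> < pi / 2"
    and phiz: "0 \<le> \<phi>z" "\<phi>z < 2 * pi"
    and corr: "hip h0 h1 = complex_of_real (sin \<tau>) * cis \<phi>z"
    and sig0: "sig0 > 0" and sig1: "sig1 > 0" and sn: "sn > 0"
    and CS: "(cmod c1)\<^sup>2 \<le> sig0 * sig1"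
    and c1nz: "c1 \<noteq> 0"
    and phic: "0 \<le> \<phi>c" "\<phi>c < 2 * pi"
    and c1pol: "c1 = complex_of_real (cmod c1) * cis \<phi>c"
    and delta: "sn * tan \<tau> - cmod c1 * cos \<tau> * cos (\<phi>c + \<phi>z) \<noteq> 0"
  shows "MSE_RZF sig0 sig1 c1 sn h0 h1 = MSE_MMSEDR sig0 sig1 c1 sn h0 h1
         \<longleftrightarrow> cos (\<phi>c + \<phi>z) = -1"
proof -
  define \<rho> where "\<rho> = hip h0 h1"
  define C where "C = 1 - (cmod \<rho>)\<^sup>2"
  have "sin \<tau> > 0" "cos \<tau> > 0"
    using tau by (simp_all add: sin_gt_zero cos_gt_zero)
  have "cmod \<rho> = sin \<tau>"
    unfolding \<rho>_def corr using \<open>sin \<tau> > 0\<close> by (simp add: norm_mult)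
  then have "C > 0"
    unfolding C_def using \<open>cos \<tau> > 0\<close> by (simp add: cos_squared_eq[symmetric])
  then have "cmod \<rho> < 1" "cnj \<rho> \<noteq> 0"
    unfolding C_def using abs_square_less_1[of "cmod \<rho>"] \<open>cmod \<rho> = sin \<tau>\<close> \<open>sin \<tau> > 0\<close> by auto
  have "c1 * \<rho> = complex_of_real (cmod c1 * sin \<tau>) * cis (\<phi>c + \<phi>z)"
    unfolding \<rho>_def corr by (subst c1pol) (simp add: cis_mult)
  then have "Re (c1 * cnj (cnj \<rho>)) = cmod c1 * cmod (cnj \<rho>) * cos (\<phi>c + \<phi>z)"
    using \<open>cmod \<rho> = sin \<tau>\<close> by simp
  note RZF = MSE_RZF_eq_INF_mse_of_leakage[OF sn less_imp_le[OF sig0] less_imp_le[OF sig1] CS h0 h1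
      \<open>cmod \<rho> < 1\<close>[unfolded \<rho>_def], folded \<rho>_def, folded C_def]
  note DR = MSE_MMSEDR_eq_mse_of_leakage[OF sn less_imp_le[OF sig1] h0 h1
      \<open>cmod \<rho> < 1\<close>[unfolded \<rho>_def], folded \<rho>_def, folded C_def]
  show ?thesis
    unfolding RZF DR
      INF_mse_of_leakage_regularized_eq_iff[OF sn less_imp_le[OF sig1] \<open>C > 0\<close> \<open>cnj \<rho> \<noteq> 0\<close>]
    using \<open>Re (c1 * cnj (cnj \<rho>)) = _\<close> c1nz \<open>cnj \<rho> \<noteq> 0\<close>
      mult_cancel_left[of "cmod c1 * cmod (cnj \<rho>)" "cos (\<phi>c + \<phi>z)" "-1"]
    by simp
qed

end
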